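(* Let $n\ge1$ and let $S=\{\mathbf{x}_0,\mathbf{x}_1,\ldots,\mathbf{x}_k\}$ be a set of distinct points of the Hamming cube $\{0,1\}^n\subset\ell_1^{(n)}$, equipped with the $\ell_1$ metric. Then $S$ has generalized roundness $\mathfrak{q}(S)=1$ if and only if the vectors $\mathbf{x}_1-\mathbf{x}_0,\mathbf{x}_2-\mathbf{x}_0,\ldots,\mathbf{x}_k-\mathbf{x}_0$ are linearly dependent in $\mathbb{R}^n$. Equivalently, $S$ has strict $1$-negative type if and only if these vectors are linearly independent in $\mathbb{R}^n$.
   Context: For $p\ge0$, a metric space $(X,d)$ has $p$-negative type if for all finite $\{x_1,\ldots,x_m\}\subseteq X$ ($m\ge2$) and all reals $\eta_1,\ldots,\eta_m$ with $\sum\eta_i=0$, $\sum_{i,j}d(x_i,x_j)^p\eta_i\eta_j\le 0$; it has strict $p$-negative type if moreover this inequality is strict whenever $(\eta_1,\ldots,\eta_m)\ne 0$. $p$ is a generalized roundness exponent if for all $m$ and all $a_1,\ldots,a_m,b_1,\ldots,b_m\in X$, $\sum_{k<l}\{d(a_k,a_l)^p+d(b_k,b_l)^p\}\le\sum_{j,i}d(a_j,b_i)^p$; the generalized roundness $\mathfrak{q}(X)$ is the supremum of all generalized roundness exponents. *)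

theory Defs
  imports "HOL-Analysis.Analysis"
begin

definition l1_dist :: "real ^ 'n \<Rightarrow> real ^ 'n \<Rightarrow> real" where
  "l1_dist x y = (\<Sum>i\<in>UNIV. \<bar>x $ i - y $ i\<bar>)"

definition hamming_cube :: "(real ^ 'n) set" where
  "hamming_cube = {x. \<forall>i. x $ i = 0 \<or> x $ i = 1}"

definition neg_type :: "('a \<Rightarrow> 'a \<Rightarrow> real) \<Rightarrow> 'a set \<Rightarrow> real \<Rightarrow> bool" where
  "neg_type d S p \<longleftrightarrow> p \<ge> 0 \<and>
     (\<forall>F \<eta>. F \<subseteq> S \<longrightarrow> finite F \<longrightarrow> card F \<ge> 2 \<longrightarrow> sum \<eta> F = 0 \<longrightarrow>
        (\<Sum>x\<in>F. \<Sum>y\<in>F. d x y powr p * \<eta> x * \<eta> y) \<le> 0)"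

definition strict_neg_type :: "('a \<Rightarrow> 'a \<Rightarrow> real) \<Rightarrow> 'a set \<Rightarrow> real \<Rightarrow> bool" where
  "strict_neg_type d S p \<longleftrightarrow> neg_type d S p \<and>
     (\<forall>F \<eta>. F \<subseteq> S \<longrightarrow> finite F \<longrightarrow> card F \<ge> 2 \<longrightarrow> sum \<eta> F = 0 \<longrightarrow>
        (\<exists>x\<in>F. \<eta> x \<noteq> 0) \<longrightarrow>
        (\<Sum>x\<in>F. \<Sum>y\<in>F. d x y powr p * \<eta> x * \<eta> y) < 0)"

definition gr_exponent :: "('a \<Rightarrow> 'a \<Rightarrow> real) \<Rightarrow> 'a set \<Rightarrow> real \<Rightarrow> bool" where
  "gr_exponent d S p \<longleftrightarrow> p \<ge> 0 \<and>
     (\<forall>m::nat. \<forall>a b. (\<forall>i<m. a i \<in> S \<and> b i \<in> S) \<longrightarrow>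
        (\<Sum>k<m. \<Sum>l\<in>{k<..<m}. d (a k) (a l) powr p + d (b k) (b l) powr p)
          \<le> (\<Sum>j<m. \<Sum>i<m. d (a j) (b i) powr p))"

text \<open>Generalized roundness, as an extended real (it may be infinite).\<close>
definition gen_roundness :: "('a \<Rightarrow> 'a \<Rightarrow> real) \<Rightarrow> 'a set \<Rightarrow> ereal" where
  "gen_roundness d S = Sup (ereal ` {p. gr_exponent d S p})"

end

theory Submission
  imports Defs
begin

text \<open>On the Hamming cube the \<open>\<ell>\<^sub>1\<close> distance is the squared Euclidean distance, so for weights
  \<open>\<eta>\<close> of total mass zero \<open>\<Sum>\<eta> u \<eta> v d(u,v) = -2 \<parallel>\<Sum>\<eta> u u\<parallel>\<^sup>2\<close>. Hence \<open>S\<close> has \<open>1\<close>-negative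
  type, strictly so exactly when it is affinely independent, i.e. when the \<open>x\<^sub>i - x\<^sub>0\<close> are linearly
  independent. By Lennard, Tonge and Weston, \<open>p\<close> is a generalized roundness exponent of a finite
  metric space iff the space has \<open>p\<close>-negative type. If \<open>S\<close> is affinely independent, the form of
  \<open>d powr p\<close> is a small perturbation of the negative definite form of \<open>d\<close>, so some \<open>p > 1\<close> is
  still of negative type. If \<open>S\<close> is affinely dependent and \<open>d powr p\<close> had negative type for some
  \<open>p > 1\<close>, then \<open>d = (d powr p) powr (1/p)\<close> would have strict negative type, by the integral
  representation of \<open>t powr a\<close> through \<open>1 - exp (- x t)\<close> and Schoenberg's theorem that
  \<open>exp (- x d powr p)\<close> is positive semidefinite; this contradicts the affine relation.\<close>

section \<open>Quadratic forms of kernels\<close>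

definition quad_form :: "'a set \<Rightarrow> ('a \<Rightarrow> 'a \<Rightarrow> real) \<Rightarrow> ('a \<Rightarrow> real) \<Rightarrow> real" where
  "quad_form F K \<xi> = (\<Sum>u\<in>F. \<Sum>v\<in>F. \<xi> u * \<xi> v * K u v)"

definition symmetric_kernel :: "'a set \<Rightarrow> ('a \<Rightarrow> 'a \<Rightarrow> real) \<Rightarrow> bool" where
  "symmetric_kernel F K \<longleftrightarrow> (\<forall>u\<in>F. \<forall>v\<in>F. K u v = K v u)"

definition psd_kernel :: "'a set \<Rightarrow> ('a \<Rightarrow> 'a \<Rightarrow> real) \<Rightarrow> bool" where
  "psd_kernel F K \<longleftrightarrow> (\<forall>\<xi>. 0 \<le> quad_form F K \<xi>)"

definition cnd_kernel :: "'a set \<Rightarrow> ('a \<Rightarrow> 'a \<Rightarrow> real) \<Rightarrow> bool" where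
  "cnd_kernel F K \<longleftrightarrow> (\<forall>\<xi>. sum \<xi> F = 0 \<longrightarrow> quad_form F K \<xi> \<le> 0)"

lemma symmetric_kernelD: "symmetric_kernel F K \<Longrightarrow> u \<in> F \<Longrightarrow> v \<in> F \<Longrightarrow> K u v = K v u"
  unfolding symmetric_kernel_def by blast

lemma quad_form_cong:
  assumes "\<And>u. u \<in> F \<Longrightarrow> \<xi> u = \<zeta> u" "\<And>u v. u \<in> F \<Longrightarrow> v \<in> F \<Longrightarrow> K u v = L u v"
  shows "quad_form F K \<xi> = quad_form F L \<zeta>"
  unfolding quad_form_def using assms by (intro sum.cong refl) auto

lemma quad_form_scale: "quad_form F K (\<lambda>u. c * \<xi> u) = c\<^sup>2 * quad_form F K \<xi>"
  unfolding quad_form_def power2_eq_square by (simp add: sum_distrib_left mult_ac)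

lemma quad_form_diff_kernel:
  "quad_form F (\<lambda>u v. K u v - L u v) \<xi> = quad_form F K \<xi> - quad_form F L \<xi>"
  unfolding quad_form_def by (simp add: right_diff_distrib sum_subtractf)

lemma quad_form_cmult_kernel: "quad_form F (\<lambda>u v. c * K u v) \<xi> = c * quad_form F K \<xi>"
  unfolding quad_form_def by (simp add: sum_distrib_left mult_ac)

lemma quad_form_minus_rank_one:
  "quad_form F (\<lambda>u v. K u v - r u * r v) \<xi> = quad_form F K \<xi> - (\<Sum>u\<in>F. \<xi> u * r u)\<^sup>2"
  unfolding quad_form_def power2_eq_square sum_product
  by (simp add: sum_subtractf algebra_simps)

lemma quad_form_one_kernel: "quad_form F (\<lambda>_ _. 1) \<xi> = (sum \<xi> F)\<^sup>2"
  unfolding quad_form_def power2_eq_square sum_product by simp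

lemma quad_form_supported:
  assumes "finite F" "G \<subseteq> F" "\<And>u. u \<in> F - G \<Longrightarrow> \<xi> u = 0"
  shows "quad_form F K \<xi> = quad_form G K \<xi>"
proof -
  have "(\<Sum>u\<in>F. \<Sum>v\<in>F. \<xi> u * \<xi> v * K u v) = (\<Sum>u\<in>G. \<Sum>v\<in>F. \<xi> u * \<xi> v * K u v)"
    using assms by (intro sum.mono_neutral_right) auto
  also have "\<dots> = (\<Sum>u\<in>G. \<Sum>v\<in>G. \<xi> u * \<xi> v * K u v)"
    using assms by (intro sum.cong refl sum.mono_neutral_right) auto
  finally show ?thesis unfolding quad_form_def .
qed

lemma quad_form_insert_null_row:
  assumes "finite F" "\<And>v. v \<in> insert b F \<Longrightarrow> K b v = 0 \<and> K v b = 0"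
  shows "quad_form (insert b F) K \<xi> = quad_form F K \<xi>"
proof (cases "b \<in> F")
  case False
  then show ?thesis using assms unfolding quad_form_def by (simp add: sum.distrib)
qed (simp add: insert_absorb)

lemma psd_kernel_subset:
  assumes "psd_kernel F K" "finite F" "G \<subseteq> F"
  shows "psd_kernel G K"
  unfolding psd_kernel_def
proof
  fix \<xi>
  have "quad_form G K \<xi> = quad_form G K (\<lambda>u. if u \<in> G then \<xi> u else 0)"
    by (rule quad_form_cong) auto
  also have "\<dots> = quad_form F K (\<lambda>u. if u \<in> G then \<xi> u else 0)"
    using assms(2,3) by (intro quad_form_supported[symmetric]) auto
  finally show "0 \<le> quad_form G K \<xi>" using assms(1) unfolding psd_kernel_def by simp
qed

lemma psd_kernel_diag_nonneg:
  assumes "psd_kernel F K" "finite F" "b \<in> F"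
  shows "0 \<le> K b b"
proof -
  have "0 \<le> quad_form {b} K (\<lambda>_. 1)"
    using psd_kernel_subset[OF assms(1,2), of "{b}"] assms(3) unfolding psd_kernel_def by simp
  then show ?thesis by (simp add: quad_form_def)
qed

text \<open>Positivity of \<open>t\<^sup>2 K b b + 2 t K b v + K v v\<close> for all \<open>t\<close>.\<close>
lemma psd_kernel_null_row:
  assumes "psd_kernel F K" "symmetric_kernel F K" "finite F" "b \<in> F" "v \<in> F" "K b b = 0"
  shows "K b v = 0"
proof (rule ccontr)
  assume ne: "K b v \<noteq> 0"
  then have bv: "b \<noteq> v" using assms(6) by auto
  define t where "t = - (K v v + 1) / (2 * K b v)"
  define \<xi> where "\<xi> = (\<lambda>u. if u = b then t else 1 :: real)"
  have "0 \<le> quad_form {b, v} K \<xi>"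
    using psd_kernel_subset[OF assms(1,3), of "{b, v}"] assms(4,5) unfolding psd_kernel_def by simp
  also have "\<dots> = 2 * t * K b v + K v v"
    using bv assms(6) symmetric_kernelD[OF assms(2,5,4)] by (simp add: quad_form_def \<xi>_def)
  also have "\<dots> = -1" using ne by (simp add: t_def field_simps)
  finally show False by simp
qed

text \<open>For \<open>K b b = 0\<close> the junk value of division makes this row vanish.\<close>
definition cholesky_row :: "('a \<Rightarrow> 'a \<Rightarrow> real) \<Rightarrow> 'a \<Rightarrow> 'a \<Rightarrow> real" where
  "cholesky_row K b u = K b u / sqrt (K b b)"

lemma psd_kernel_rank_one_reduction:
  assumes psd: "psd_kernel (insert b F) K" and sym: "symmetric_kernel (insert b F) K"
    and F: "finite F" "b \<notin> F"
  shows "\<And>v. v \<in> insert b F \<Longrightarrow>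
           K b v = cholesky_row K b b * cholesky_row K b v \<and> K v b = cholesky_row K b v * cholesky_row K b b"
    and "psd_kernel F (\<lambda>u v. K u v - cholesky_row K b u * cholesky_row K b v)"
proof -
  let ?r = "cholesky_row K b"
  have Kbb: "0 \<le> K b b" using psd_kernel_diag_nonneg[OF psd] F by simp
  show row: "K b v = ?r b * ?r v \<and> K v b = ?r v * ?r b" if v: "v \<in> insert b F" for v
  proof -
    have Kvb: "K v b = K b v" using symmetric_kernelD[OF sym v] by simp
    have "K b v = ?r b * ?r v"
    proof (cases "K b b = 0")
      case True
      then show ?thesis using psd_kernel_null_row[OF psd sym _ _ v True] F by (simp add: cholesky_row_def)
    next
      case False
      have "sqrt (K b b) * sqrt (K b b) = K b b" using Kbb by simp
      then show ?thesis using False by (simp add: cholesky_row_def field_simps)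
    qed
    then show ?thesis using Kvb by (simp add: mult.commute)
  qed
  show "psd_kernel F (\<lambda>u v. K u v - ?r u * ?r v)"
    unfolding psd_kernel_def
  proof
    fix \<xi>
    define \<xi>' where "\<xi>' = \<xi>(b := - (\<Sum>u\<in>F. \<xi> u * ?r u) / ?r b)"
    have r0: "?r u = 0" if "?r b = 0" for u using that by (simp add: cholesky_row_def)
    have orth: "(\<Sum>u\<in>insert b F. \<xi>' u * ?r u) = 0"
    proof -
      have "(\<Sum>u\<in>insert b F. \<xi>' u * ?r u) = \<xi>' b * ?r b + (\<Sum>u\<in>F. \<xi> u * ?r u)"
        using F by (simp add: \<xi>'_def) (intro sum.cong, auto)
      then show ?thesis by (cases "?r b = 0") (simp_all add: \<xi>'_def r0)
    qed
    have "0 \<le> quad_form (insert b F) K \<xi>'" using psd unfolding psd_kernel_def by blast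
    also have "\<dots> = quad_form (insert b F) (\<lambda>u v. K u v - ?r u * ?r v) \<xi>'"
      by (simp add: quad_form_minus_rank_one orth)
    also have "\<dots> = quad_form F (\<lambda>u v. K u v - ?r u * ?r v) \<xi>'"
      using row F by (intro quad_form_insert_null_row) (auto simp: mult.commute)
    also have "\<dots> = quad_form F (\<lambda>u v. K u v - ?r u * ?r v) \<xi>"
      using F by (intro quad_form_cong) (auto simp: \<xi>'_def)
    finally show "0 \<le> quad_form F (\<lambda>u v. K u v - ?r u * ?r v) \<xi>" .
  qed
qed

lemma psd_kernel_Gram:
  assumes "finite F" "psd_kernel F K" "symmetric_kernel F K"
  shows "\<exists>w. \<forall>u\<in>F. \<forall>v\<in>F. K u v = (\<Sum>a\<in>F. w u a * w v a)"
  using assms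
proof (induction F arbitrary: K rule: finite_induct)
  case empty
  then show ?case by simp
next
  case (insert b F K)
  let ?r = "cholesky_row K b"
  note reduction = psd_kernel_rank_one_reduction[OF insert.prems insert.hyps(1,2)]
  have "symmetric_kernel F (\<lambda>u v. K u v - ?r u * ?r v)"
    using symmetric_kernelD[OF insert.prems(2)] unfolding symmetric_kernel_def by (simp add: mult.commute)
  then obtain w where w: "\<forall>u\<in>F. \<forall>v\<in>F. K u v - ?r u * ?r v = (\<Sum>a\<in>F. w u a * w v a)"
    using insert.IH[OF reduction(2)] by blast
  define w' where "w' = (\<lambda>u a. if a = b then ?r u else if u = b then 0 else w u a)"
  have "K u v = (\<Sum>a\<in>insert b F. w' u a * w' v a)" if "u \<in> insert b F" "v \<in> insert b F" for u v
  proof -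
    have split: "(\<Sum>a\<in>insert b F. w' u a * w' v a) = ?r u * ?r v + (\<Sum>a\<in>F. w' u a * w' v a)"
      using insert.hyps by (simp add: w'_def)
    show ?thesis
    proof (cases "u = b \<or> v = b")
      case True
      have "(\<Sum>a\<in>F. w' u a * w' v a) = 0"
        using True insert.hyps by (intro sum.neutral) (auto simp: w'_def)
      moreover have "K u v = ?r u * ?r v"
        using True reduction(1)[OF that(1)] reduction(1)[OF that(2)] by (elim disjE) simp_all
      ultimately show ?thesis unfolding split by simp
    next
      case False
      then have "(\<Sum>a\<in>F. w' u a * w' v a) = K u v - ?r u * ?r v"
        using that w insert.hyps by (auto simp: w'_def intro!: sum.cong)
      then show ?thesis unfolding split by simp
    qed
  qed
  then show ?case by blast
qed

lemma psd_kernel_mult: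
  assumes "psd_kernel F M" "finite A" "\<And>u v. u \<in> F \<Longrightarrow> v \<in> F \<Longrightarrow> K u v = (\<Sum>a\<in>A. w u a * w v a)"
  shows "psd_kernel F (\<lambda>u v. M u v * K u v)"
  unfolding psd_kernel_def
proof
  fix \<xi>
  have "quad_form F (\<lambda>u v. M u v * K u v) \<xi> = (\<Sum>a\<in>A. quad_form F M (\<lambda>u. \<xi> u * w u a))"
    unfolding quad_form_def using assms(3)
    by (simp add: sum_distrib_left sum_distrib_right mult_ac sum.swap[of _ A] cong: sum.cong)
  also have "\<dots> \<ge> 0" using assms(1) unfolding psd_kernel_def by (intro sum_nonneg) auto
  finally show "0 \<le> quad_form F (\<lambda>u v. M u v * K u v) \<xi>" .
qed

lemma psd_kernel_power:
  assumes "finite F" "psd_kernel F K" "symmetric_kernel F K"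
  shows "psd_kernel F (\<lambda>u v. K u v ^ m)"
proof (induction m)
  case 0
  show ?case by (simp add: psd_kernel_def quad_form_one_kernel)
next
  case (Suc m)
  obtain w where "\<forall>u\<in>F. \<forall>v\<in>F. K u v = (\<Sum>a\<in>F. w u a * w v a)"
    using psd_kernel_Gram[OF assms] by blast
  then have "psd_kernel F (\<lambda>u v. K u v ^ m * K u v)"
    using psd_kernel_mult[OF Suc assms(1)] by blast
  then show ?case by (simp add: mult.commute)
qed

lemma psd_kernel_exp:
  assumes "finite F" "psd_kernel F K" "symmetric_kernel F K"
  shows "psd_kernel F (\<lambda>u v. exp (K u v))"
  unfolding psd_kernel_def
proof
  fix \<xi>
  have series: "(\<lambda>n. quad_form F (\<lambda>u v. K u v ^ n /\<^sub>R fact n) \<xi>) sums quad_form F (\<lambda>u v. exp (K u v)) \<xi>"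
    unfolding quad_form_def by (intro sums_sum sums_mult exp_converges)
  have "0 \<le> quad_form F (\<lambda>u v. K u v ^ n /\<^sub>R fact n) \<xi>" for n
    using psd_kernel_power[OF assms, of n] quad_form_cmult_kernel[of F "inverse (fact n)"]
    by (simp add: psd_kernel_def)
  then show "0 \<le> quad_form F (\<lambda>u v. exp (K u v)) \<xi>"
    using sums_le[OF _ sums_zero series] by simp
qed

lemma quad_form_rescale:
  "quad_form F (\<lambda>u v. f u * f v * K u v) \<xi> = quad_form F K (\<lambda>u. \<xi> u * f u)"
  unfolding quad_form_def by (simp add: mult_ac)

lemma quad_form_sum_kernel: "quad_form F (\<lambda>u v. f u + f v) \<xi> = 2 * sum \<xi> F * (\<Sum>u\<in>F. \<xi> u * f u)"
proof -
  have "(\<Sum>u\<in>F. \<Sum>v\<in>F. \<xi> u * \<xi> v * f v) = (\<Sum>u\<in>F. \<Sum>v\<in>F. \<xi> u * \<xi> v * f u)"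
    by (subst sum.swap) (simp add: mult.commute)
  moreover have "(\<Sum>u\<in>F. \<Sum>v\<in>F. \<xi> u * \<xi> v * f u) = sum \<xi> F * (\<Sum>u\<in>F. \<xi> u * f u)"
    by (simp add: sum_distrib_left sum_distrib_right mult_ac)
  ultimately show ?thesis unfolding quad_form_def by (simp add: distrib_left sum.distrib)
qed

lemma quad_form_shift_point:
  assumes "finite F" "u0 \<in> F"
  shows "quad_form F K (\<lambda>u. \<xi> u - (if u = u0 then c else 0))
       = quad_form F K \<xi> - c * (\<Sum>u\<in>F. \<xi> u * K u u0) - c * (\<Sum>v\<in>F. \<xi> v * K u0 v) + c\<^sup>2 * K u0 u0"
proof -
  let ?e = "\<lambda>u. if u = u0 then c else 0"
  have delta: "(\<Sum>u\<in>F. ?e u * g u) = c * g u0" for g :: "'a \<Rightarrow> real"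
  proof -
    have "(\<Sum>u\<in>F. ?e u * g u) = (\<Sum>u\<in>F. if u = u0 then c * g u0 else 0)"
      by (intro sum.cong) auto
    then show ?thesis using assms by simp
  qed
  have expand: "quad_form F K (\<lambda>u. \<xi> u - ?e u)
      = quad_form F K \<xi> - (\<Sum>u\<in>F. ?e u * (\<Sum>v\<in>F. \<xi> v * K u v))
        - (\<Sum>u\<in>F. \<xi> u * (\<Sum>v\<in>F. ?e v * K u v)) + (\<Sum>u\<in>F. ?e u * (\<Sum>v\<in>F. ?e v * K u v))"
    unfolding quad_form_def by (simp add: algebra_simps sum_subtractf sum.distrib sum_distrib_left)
  have "(\<Sum>u\<in>F. \<xi> u * (\<Sum>v\<in>F. ?e v * K u v)) = c * (\<Sum>u\<in>F. \<xi> u * K u u0)"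
    unfolding delta sum_distrib_left by (simp add: mult.left_commute)
  moreover have "(\<Sum>u\<in>F. ?e u * (\<Sum>v\<in>F. ?e v * K u v)) = c\<^sup>2 * K u0 u0"
    unfolding delta by (simp add: power2_eq_square)
  ultimately show ?thesis using expand unfolding delta by linarith
qed

text \<open>Removing the total mass of \<open>\<xi>\<close> at \<open>u0\<close> turns the Gromov product kernel into the
  negative of a conditionally negative definite form.\<close>
lemma cnd_kernel_imp_psd_kernel_Gromov:
  assumes "finite F" "u0 \<in> F" "cnd_kernel F A" "symmetric_kernel F A" "A u0 u0 = 0"
  shows "psd_kernel F (\<lambda>u v. A u u0 + A v u0 - A u v)"
  unfolding psd_kernel_def
proof
  fix \<xi> :: "'a \<Rightarrow> real"
  define s where "s = sum \<xi> F"
  define \<zeta> where "\<zeta> = (\<lambda>u. \<xi> u - (if u = u0 then s else 0))"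
  have "sum \<zeta> F = 0" using assms(1,2) by (simp add: \<zeta>_def s_def sum_subtractf)
  then have "quad_form F A \<zeta> \<le> 0" using assms(3) unfolding cnd_kernel_def by blast
  moreover have "quad_form F A \<zeta> = quad_form F A \<xi> - 2 * s * (\<Sum>u\<in>F. \<xi> u * A u u0)"
  proof -
    have "(\<Sum>v\<in>F. \<xi> v * A u0 v) = (\<Sum>u\<in>F. \<xi> u * A u u0)"
      using symmetric_kernelD[OF assms(4) assms(2)] by (intro sum.cong) simp_all
    moreover have "quad_form F A \<zeta> = quad_form F A \<xi> - s * (\<Sum>u\<in>F. \<xi> u * A u u0)
        - s * (\<Sum>v\<in>F. \<xi> v * A u0 v) + s\<^sup>2 * A u0 u0"
      unfolding \<zeta>_def by (rule quad_form_shift_point[OF assms(1,2)])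
    ultimately show ?thesis using assms(5) by simp
  qed
  moreover have "quad_form F (\<lambda>u v. A u u0 + A v u0 - A u v) \<xi>
      = 2 * s * (\<Sum>u\<in>F. \<xi> u * A u u0) - quad_form F A \<xi>"
    unfolding quad_form_diff_kernel quad_form_sum_kernel s_def by simp
  ultimately show "0 \<le> quad_form F (\<lambda>u v. A u u0 + A v u0 - A u v) \<xi>" by linarith
qed

lemma cnd_kernel_imp_psd_kernel_exp:
  assumes "finite F" "cnd_kernel F A" "symmetric_kernel F A" "\<And>u. u \<in> F \<Longrightarrow> A u u = 0" "t \<ge> 0"
  shows "psd_kernel F (\<lambda>u v. exp (- (t * A u v)))"
proof (cases "F = {}")
  case True
  then show ?thesis by (simp add: psd_kernel_def quad_form_def)
next
  case False
  then obtain u0 where u0: "u0 \<in> F" by blast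
  define K where "K = (\<lambda>u v. t * (A u u0 + A v u0 - A u v))"
  have "psd_kernel F K"
    using cnd_kernel_imp_psd_kernel_Gromov[OF assms(1) u0 assms(2,3) assms(4)[OF u0]] assms(5)
    by (simp add: K_def psd_kernel_def quad_form_cmult_kernel)
  moreover have "symmetric_kernel F K"
    using symmetric_kernelD[OF assms(3)] unfolding symmetric_kernel_def K_def by simp
  ultimately have "psd_kernel F (\<lambda>u v. exp (K u v))" by (rule psd_kernel_exp[OF assms(1)])
  then have "psd_kernel F (\<lambda>u v. exp (- (t * A u u0)) * exp (- (t * A v u0)) * exp (K u v))"
    by (simp add: psd_kernel_def quad_form_rescale)
  moreover have "(\<lambda>u v. exp (- (t * A u u0)) * exp (- (t * A v u0)) * exp (K u v)) = (\<lambda>u v. exp (- (t * A u v)))"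
  proof (intro ext)
    fix u v
    have "- (t * A u u0) + - (t * A v u0) + K u v = - (t * A u v)" by (simp add: K_def algebra_simps)
    then show "exp (- (t * A u u0)) * exp (- (t * A v u0)) * exp (K u v) = exp (- (t * A u v))"
      by (simp only: exp_add[symmetric])
  qed
  ultimately show ?thesis by simp
qed

section \<open>An integral representation of real powers\<close>

lemma integrable_lborel_if_integrable_on_nonneg:
  fixes f :: "real \<Rightarrow> real"
  assumes "f integrable_on S" "\<And>x. x \<in> S \<Longrightarrow> 0 \<le> f x"
    "(\<lambda>x. indicator S x * f x) \<in> borel_measurable borel"
  shows "integrable lborel (\<lambda>x. indicator S x * f x)"
proof -
  have "f absolutely_integrable_on S" by (rule nonnegative_absolutely_integrable_1[OF assms(1,2)])
  then have "integrable lebesgue (\<lambda>x. indicator S x * f x)"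
    unfolding set_integrable_def by simp
  then show ?thesis using integrable_completion[of "\<lambda>x. indicator S x * f x" lborel] assms(3)
    by simp
qed

lemma not_AE_lborel_le: "\<not> (AE x in lborel. (x::real) \<le> L)"
proof
  assume "AE x in lborel. x \<le> L"
  then have "emeasure lborel {L<..} = 0"
    by (subst (asm) AE_iff_measurable[of "{L<..}"]) auto
  moreover have "emeasure lborel {L<..<L+1} \<le> emeasure lborel {L<..}"
    by (intro emeasure_mono) auto
  ultimately show False by simp
qed

lemma integral_lborel_pos_if_pos_on_ray:
  fixes h :: "real \<Rightarrow> real"
  assumes "integrable lborel h" "\<And>x. 0 \<le> h x" "\<And>x. x > L \<Longrightarrow> h x > 0"
  shows "integral\<^sup>L lborel h > 0"
proof -
  have "integral\<^sup>L lborel h \<noteq> 0"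
  proof
    assume "integral\<^sup>L lborel h = 0"
    then have "AE x in lborel. h x = 0"
      using integral_nonneg_eq_0_iff_AE[OF assms(1)] assms(2) by simp
    moreover have "x \<le> L" if "h x = 0" for x using assms(3)[of x] that by force
    ultimately have "AE x in lborel. x \<le> L" by (auto elim: eventually_mono)
    then show False using not_AE_lborel_le by blast
  qed
  then show ?thesis using assms(2) integral_nonneg_AE[of h lborel] by fastforce
qed

text \<open>The integrand of \<open>s powr a = c\<^sub>a * (\<integral>\<^sub>0\<^sup>\<infinity> (1 - exp (- x * s)) * x powr (-1-a) dx)\<close>,
  \<open>0 < a < 1\<close>, which turns powers of a kernel into integrals of exponentials of it.\<close>
definition powr_integrand :: "real \<Rightarrow> real \<Rightarrow> real \<Rightarrow> real" where
  "powr_integrand a s x = indicator {0<..} x * ((1 - exp (- (x * s))) * x powr (-1-a))"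

lemma powr_integrand_measurable: "powr_integrand a s \<in> borel_measurable lborel"
  unfolding powr_integrand_def by measurable

lemma powr_integrand_nonneg: "s \<ge> 0 \<Longrightarrow> 0 \<le> powr_integrand a s x"
  unfolding powr_integrand_def by (auto simp: indicator_def intro!: mult_nonneg_nonneg)

lemma powr_integrand_scale:
  assumes "s > 0"
  shows "powr_integrand a s x = s powr (1 + a) * powr_integrand a 1 (s * x)"
proof (cases "x > 0")
  case True
  have "(s * x) powr (-1-a) = s powr (-1-a) * x powr (-1-a)" using True assms by (simp add: powr_mult)
  moreover have "s powr (1 + a) * s powr (-1-a) = 1" using assms by (simp add: powr_add[symmetric])
  ultimately show ?thesis using True assms unfolding powr_integrand_def
    by (simp add: mult_ac zero_less_mult_iff)
next
  case False
  then show ?thesis using assms by (simp add: powr_integrand_def zero_less_mult_iff)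
qed

text \<open>Near \<open>0\<close> the integrand is at most \<open>x powr (-a)\<close> since \<open>1 - exp (-x) \<le> x\<close>; near \<open>\<infinity>\<close> it is
  at most \<open>x powr (-1-a)\<close>.\<close>
lemma powr_integrand_one_le:
  "powr_integrand a 1 x \<le> indicator {0<..1} x * x powr (-a) + indicator {1..} x * x powr (-1-a)"
proof (cases "x > 0")
  case True
  have "1 - exp (-x) \<le> x" using exp_ge_add_one_self[of "-x"] by simp
  then have "(1 - exp (-x)) * x powr (-1-a) \<le> x * x powr (-1-a)"
    by (intro mult_right_mono) auto
  also have "\<dots> = x powr (-a)" using True by (simp add: powr_mult_base)
  finally have near: "powr_integrand a 1 x \<le> x powr (-a)" using True by (simp add: powr_integrand_def)
  have far: "powr_integrand a 1 x \<le> x powr (-1-a)"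
    using True by (auto simp: powr_integrand_def intro!: mult_left_le_one_le)
  show ?thesis
  proof (cases "x \<le> 1")
    case True
    have "indicator {0<..1} x = (1::real)" using True \<open>x > 0\<close> by simp
    moreover have "0 \<le> indicator {1..} x * x powr (-1-a)" by simp
    ultimately show ?thesis using near by (simp add: add_increasing2)
  next
    case False
    then show ?thesis using far by (simp add: indicator_def)
  qed
qed (simp add: powr_integrand_def)

lemma integrable_powr_integrand_one:
  assumes "0 < a" "a < 1"
  shows "integrable lborel (powr_integrand a 1)"
proof (rule Bochner_Integration.integrable_bound)
  have "integrable lborel (\<lambda>x::real. indicator {0<..1} x * x powr (-a))"
    by (rule integrable_lborel_if_integrable_on_nonneg[OF integrable_on_powr_from_0'])
      (use assms in auto)
  moreover have "integrable lborel (\<lambda>x::real. indicator {1..} x * x powr (-1-a))"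
  proof (rule integrable_lborel_if_integrable_on_nonneg)
    show "(\<lambda>x. x powr (-1-a)) integrable_on {1..}"
      using has_integral_powr_to_inf[of "-1-a" 1] assms unfolding integrable_on_def by auto
  qed auto
  ultimately show "integrable lborel
      (\<lambda>x::real. indicator {0<..1} x * x powr (-a) + indicator {1..} x * x powr (-1-a))"
    by (rule Bochner_Integration.integrable_add)
  show "AE x in lborel. norm (powr_integrand a 1 x)
      \<le> norm (indicator {0<..1} x * x powr (-a) + indicator {1..} x * x powr (-1-a))"
    using powr_integrand_one_le[of a] powr_integrand_nonneg[of 1 a] by (auto intro: order_trans)
qed (rule powr_integrand_measurable)

lemma integral_powr_integrand:
  assumes "0 < a" "a < 1" "s \<ge> 0"
  shows "integrable lborel (powr_integrand a s)"
    and "integral\<^sup>L lborel (powr_integrand a s) = s powr a * integral\<^sup>L lborel (powr_integrand a 1)"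
proof -
  have "integrable lborel (powr_integrand a s) \<and>
      integral\<^sup>L lborel (powr_integrand a s) = s powr a * integral\<^sup>L lborel (powr_integrand a 1)"
  proof (cases "s = 0")
    case True
    moreover have "powr_integrand a 0 = (\<lambda>_. 0)" by (simp add: powr_integrand_def fun_eq_iff)
    ultimately show ?thesis by simp
  next
    case False
    then have s: "s > 0" using assms by simp
    have eq: "powr_integrand a s = (\<lambda>x. s powr (1 + a) * powr_integrand a 1 (0 + s * x))"
      using powr_integrand_scale[OF s] by auto
    have "integrable lborel (\<lambda>x. powr_integrand a 1 (0 + s * x))"
      using lborel_integrable_real_affine[OF integrable_powr_integrand_one[OF assms(1,2)], of s 0] s
      by simp
    moreover have "integral\<^sup>L lborel (powr_integrand a 1)
        = s * integral\<^sup>L lborel (\<lambda>x. powr_integrand a 1 (0 + s * x))"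
      using lborel_integral_real_affine[of s "powr_integrand a 1" 0] s by simp
    ultimately show ?thesis
      unfolding eq using s by (simp add: powr_add field_simps)
  qed
  then show "integrable lborel (powr_integrand a s)"
    "integral\<^sup>L lborel (powr_integrand a s) = s powr a * integral\<^sup>L lborel (powr_integrand a 1)"
    by auto
qed

lemma integral_powr_integrand_one_pos:
  assumes "0 < a" "a < 1"
  shows "integral\<^sup>L lborel (powr_integrand a 1) > 0"
proof (rule integral_lborel_pos_if_pos_on_ray[OF integrable_powr_integrand_one[OF assms]])
  show "0 \<le> powr_integrand a 1 x" for x by (rule powr_integrand_nonneg) simp
  show "0 < powr_integrand a 1 x" if "x > 0" for x using that by (simp add: powr_integrand_def)
qed

section \<open>Strict conditional negative definiteness of powers\<close>

lemma exp_neg_mult_tendsto_0: "c > 0 \<Longrightarrow> ((\<lambda>x::real. exp (- (x * c))) \<longlongrightarrow> 0) at_top"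
proof -
  assume "c > 0"
  then have "LIM x at_top. x * c :> at_top"
    by (intro filterlim_at_top_mult_tendsto_pos[OF tendsto_const _ filterlim_ident])
  then have "LIM x at_top. - (x * c) :> at_bot"
    by (simp add: filterlim_uminus_at_bot)
  then show ?thesis by (rule filterlim_compose[OF exp_at_bot])
qed

lemma quad_form_exp_tendsto:
  assumes "finite F" "\<And>u. u \<in> F \<Longrightarrow> A u u = 0"
    and "\<And>u v. u \<in> F \<Longrightarrow> v \<in> F \<Longrightarrow> u \<noteq> v \<Longrightarrow> A u v > 0"
  shows "((\<lambda>x. quad_form F (\<lambda>u v. exp (- (x * A u v))) \<xi>) \<longlongrightarrow> (\<Sum>u\<in>F. (\<xi> u)\<^sup>2)) at_top"
proof -
  have "((\<lambda>x. quad_form F (\<lambda>u v. exp (- (x * A u v))) \<xi>)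
      \<longlongrightarrow> (\<Sum>u\<in>F. \<Sum>v\<in>F. if u = v then \<xi> u * \<xi> v else 0)) at_top"
    unfolding quad_form_def
  proof (intro tendsto_sum)
    fix u v assume uv: "u \<in> F" "v \<in> F"
    show "((\<lambda>x. \<xi> u * \<xi> v * exp (- (x * A u v))) \<longlongrightarrow> (if u = v then \<xi> u * \<xi> v else 0)) at_top"
    proof (cases "u = v")
      case True
      then show ?thesis using assms(2) uv by simp
    next
      case False
      then show ?thesis
        using tendsto_mult_right_zero[OF exp_neg_mult_tendsto_0[OF assms(3)[OF uv False]]] by simp
    qed
  qed
  then show ?thesis using assms(1) by (simp add: sum.delta power2_eq_square)
qed

text \<open>Integrating \<open>x powr (-1-a) * (1 - exp (- x * A u v))\<close> against \<open>\<xi> u * \<xi> v\<close> turns the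
  quadratic form of \<open>A powr a\<close> into minus the integral of \<open>x powr (-1-a)\<close> times the
  nonnegative quadratic forms of \<open>exp (- x * A)\<close>; these tend to \<open>\<Sum>u. (\<xi> u)\<^sup>2 > 0\<close> as
  \<open>x \<rightarrow> \<infinity>\<close>.\<close>
lemma cnd_kernel_powr_strict:
  assumes F: "finite F" and cnd: "cnd_kernel F A" and sym: "symmetric_kernel F A"
    and diag: "\<And>u. u \<in> F \<Longrightarrow> A u u = 0"
    and pos: "\<And>u v. u \<in> F \<Longrightarrow> v \<in> F \<Longrightarrow> u \<noteq> v \<Longrightarrow> A u v > 0"
    and a: "0 < a" "a < 1"
    and \<xi>: "sum \<xi> F = 0" "\<exists>u\<in>F. \<xi> u \<noteq> 0"
  shows "quad_form F (\<lambda>u v. A u v powr a) \<xi> < 0"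
proof -
  have A_nonneg: "A u v \<ge> 0" if "u \<in> F" "v \<in> F" for u v
    using pos[OF that] diag that by (cases "u = v") auto
  define G where "G = (\<lambda>x. quad_form F (\<lambda>u v. exp (- (x * A u v))) \<xi>)"
  define H where "H = (\<lambda>x. indicator {0<..} x * x powr (-1-a) * G x)"
  define P where "P = (\<lambda>x. \<Sum>u\<in>F. \<Sum>v\<in>F. \<xi> u * \<xi> v * powr_integrand a (A u v) x)"
  have int_P: "integrable lborel P"
    unfolding P_def using integral_powr_integrand(1)[OF a A_nonneg]
    by (intro Bochner_Integration.integrable_sum Bochner_Integration.integrable_mult_right) auto
  have "quad_form F (\<lambda>u v. A u v powr a) \<xi> * integral\<^sup>L lborel (powr_integrand a 1)
      = (\<Sum>u\<in>F. \<Sum>v\<in>F. \<xi> u * \<xi> v * integral\<^sup>L lborel (powr_integrand a (A u v)))"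
    unfolding quad_form_def sum_distrib_right
    by (intro sum.cong refl) (simp add: integral_powr_integrand(2)[OF a A_nonneg])
  also have "\<dots> = integral\<^sup>L lborel P"
    unfolding P_def using integral_powr_integrand(1)[OF a A_nonneg]
    by (simp add: Bochner_Integration.integral_sum Bochner_Integration.integrable_sum
        Bochner_Integration.integrable_mult_right)
  also have "P = (\<lambda>x. - H x)"
  proof
    fix x
    have "(\<Sum>u\<in>F. \<Sum>v\<in>F. \<xi> u * \<xi> v) = 0" using \<xi>(1) by (simp add: sum_product[symmetric])
    moreover have "P x = (\<Sum>u\<in>F. \<Sum>v\<in>F. indicator {0<..} x * x powr (-1-a)
        * (\<xi> u * \<xi> v - \<xi> u * \<xi> v * exp (- (x * A u v))))"
      unfolding P_def powr_integrand_def by (intro sum.cong refl) (simp add: algebra_simps)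
    moreover have "\<dots> = indicator {0<..} x * x powr (-1-a) * ((\<Sum>u\<in>F. \<Sum>v\<in>F. \<xi> u * \<xi> v) - G x)"
      unfolding G_def quad_form_def by (simp add: right_diff_distrib sum_subtractf sum_distrib_left)
    ultimately show "P x = - H x" by (simp add: H_def)
  qed
  finally have quad_eq: "quad_form F (\<lambda>u v. A u v powr a) \<xi> * integral\<^sup>L lborel (powr_integrand a 1)
      = - integral\<^sup>L lborel H" by simp
  have "0 < (\<Sum>u\<in>F. (\<xi> u)\<^sup>2)"
  proof -
    obtain u where "u \<in> F" "\<xi> u \<noteq> 0" using \<xi>(2) by blast
    then show ?thesis using F by (intro sum_pos2[of _ u]) auto
  qed
  moreover have "(G \<longlongrightarrow> (\<Sum>u\<in>F. (\<xi> u)\<^sup>2)) at_top"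
    unfolding G_def by (rule quad_form_exp_tendsto[OF F diag pos])
  ultimately have "eventually (\<lambda>x. G x > 0) at_top" using order_tendstoD(1) by blast
  then obtain L where L: "\<And>x. x \<ge> L \<Longrightarrow> G x > 0"
    unfolding eventually_at_top_linorder by blast
  have "G x \<ge> 0" if "x \<ge> 0" for x
    using cnd_kernel_imp_psd_kernel_exp[OF F cnd sym diag that] unfolding G_def psd_kernel_def by blast
  then have "0 \<le> H x" for x by (simp add: H_def indicator_def)
  moreover have "0 < H x" if "x > max L 0" for x using L[of x] that by (simp add: H_def)
  moreover have "integrable lborel H" using int_P unfolding \<open>P = (\<lambda>x. - H x)\<close> by simp
  ultimately have "integral\<^sup>L lborel H > 0" by (intro integral_lborel_pos_if_pos_on_ray)
  then have "quad_form F (\<lambda>u v. A u v powr a) \<xi> * integral\<^sup>L lborel (powr_integrand a 1) < 0"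
    unfolding quad_eq by simp
  then show ?thesis
    using integral_powr_integrand_one_pos[OF a] by (simp add: mult_less_0_iff)
qed

section \<open>Generalized roundness and negative type\<close>

lemma sum_upper_triangle_double:
  fixes f :: "nat \<Rightarrow> nat \<Rightarrow> real"
  assumes "\<And>k l. f k l = f l k" "\<And>k. f k k = 0"
  shows "2 * (\<Sum>k<m. \<Sum>l\<in>{k<..<m}. f k l) = (\<Sum>k<m. \<Sum>l<m. f k l)"
proof (induction m)
  case 0
  then show ?case by simp
next
  case (Suc m)
  have "{k<..<Suc m} = insert m {k<..<m}" if "k < m" for k using that by auto
  moreover have "{m<..<Suc m} = {}" by auto
  ultimately have "(\<Sum>k<Suc m. \<Sum>l\<in>{k<..<Suc m}. f k l) = (\<Sum>k<m. f k m) + (\<Sum>k<m. \<Sum>l\<in>{k<..<m}. f k l)"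
    by (simp add: sum.distrib)
  moreover have "(\<Sum>k<Suc m. \<Sum>l<Suc m. f k l)
      = (\<Sum>k<m. \<Sum>l<m. f k l) + (\<Sum>k<m. f k m) + (\<Sum>l<m. f m l) + f m m"
    by (simp add: sum.distrib)
  moreover have "(\<Sum>l<m. f m l) = (\<Sum>k<m. f k m)" using assms(1) by simp
  ultimately show ?case using Suc.IH assms(2) by simp
qed

lemma sum_by_multiplicity:
  fixes g :: "'a \<Rightarrow> real" and m :: nat
  assumes "finite S" "\<forall>i<m. a i \<in> S"
  shows "(\<Sum>j<m. g (a j)) = (\<Sum>u\<in>S. real (card {j. j < m \<and> a j = u}) * g u)"
proof -
  have "(\<Sum>u\<in>S. \<Sum>j\<in>{j. j \<in> {..<m} \<and> a j = u}. g (a j)) = (\<Sum>j<m. g (a j))"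
    by (rule sum.group) (use assms in auto)
  then show ?thesis by simp
qed

text \<open>With \<open>c\<^sub>a\<close>, \<open>c\<^sub>b\<close> the multiplicities of the points in the two tuples, twice the left-hand
  side of the roundness inequality is \<open>Q(c\<^sub>a) + Q(c\<^sub>b)\<close> and its right-hand side is the mixed term
  of \<open>Q(c\<^sub>a - c\<^sub>b)\<close>, where \<open>Q\<close> is the quadratic form of \<open>D\<close>.\<close>
lemma roundness_inequality_iff_quad_form:
  fixes D :: "'a \<Rightarrow> 'a \<Rightarrow> real" and m :: nat
  assumes sym: "\<And>u v. D u v = D v u" and diag: "\<And>u. D u u = 0"
    and ca: "\<And>g. (\<Sum>j<m. g (a j)) = (\<Sum>u\<in>S. ca u * g u)"
    and cb: "\<And>g. (\<Sum>j<m. g (b j)) = (\<Sum>u\<in>S. cb u * g u)"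
  shows "(\<Sum>k<m. \<Sum>l\<in>{k<..<m}. D (a k) (a l) + D (b k) (b l)) \<le> (\<Sum>j<m. \<Sum>i<m. D (a j) (b i))
     \<longleftrightarrow> quad_form S D (\<lambda>u. ca u - cb u) \<le> 0"
proof -
  define B where "B = (\<lambda>cx cy. \<Sum>u\<in>S. \<Sum>v\<in>S. cx u * cy v * D u v)"
  have double: "(\<Sum>j<m. \<Sum>i<m. D (x j) (y i)) = B cx cy"
    if cx: "\<And>g. (\<Sum>j<m. g (x j)) = (\<Sum>u\<in>S. cx u * g u)"
      and cy: "\<And>g. (\<Sum>j<m. g (y j)) = (\<Sum>u\<in>S. cy u * g u)" for x y cx cy
  proof -
    have "(\<Sum>j<m. \<Sum>i<m. D (x j) (y i)) = (\<Sum>j<m. \<Sum>v\<in>S. cy v * D (x j) v)"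
      by (intro sum.cong refl) (rule cy)
    also have "\<dots> = (\<Sum>u\<in>S. cx u * (\<Sum>v\<in>S. cy v * D u v))" by (rule cx)
    finally show ?thesis by (simp add: B_def sum_distrib_left mult_ac)
  qed
  have "2 * (\<Sum>k<m. \<Sum>l\<in>{k<..<m}. D (a k) (a l) + D (b k) (b l))
      = (\<Sum>k<m. \<Sum>l<m. D (a k) (a l)) + (\<Sum>k<m. \<Sum>l<m. D (b k) (b l))"
    using sum_upper_triangle_double[of "\<lambda>k l. D (a k) (a l)"]
      sum_upper_triangle_double[of "\<lambda>k l. D (b k) (b l)"] sym diag
    by (simp add: sum.distrib distrib_left)
  also have "\<dots> = B ca ca + B cb cb" by (simp add: double[OF ca ca] double[OF cb cb])
  finally have lhs: "2 * (\<Sum>k<m. \<Sum>l\<in>{k<..<m}. D (a k) (a l) + D (b k) (b l)) = B ca ca + B cb cb" .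
  have "B cb ca = B ca cb"
    unfolding B_def by (subst sum.swap) (simp add: sym mult_ac)
  then have "quad_form S D (\<lambda>u. ca u - cb u) = B ca ca + B cb cb - 2 * B ca cb"
    unfolding quad_form_def B_def by (simp add: algebra_simps sum_subtractf sum.distrib)
  then show ?thesis using lhs double[OF ca cb] by linarith
qed

lemma cnd_kernel_imp_gr_exponent:
  fixes d :: "'a \<Rightarrow> 'a \<Rightarrow> real"
  assumes "finite S" "\<And>u v. d u v = d v u" "\<And>u. d u u = 0"
    and "p \<ge> 0" "cnd_kernel S (\<lambda>u v. d u v powr p)"
  shows "gr_exponent d S p"
  unfolding gr_exponent_def
proof (intro conjI allI impI \<open>p \<ge> 0\<close>)
  fix m :: nat and a b :: "nat \<Rightarrow> 'a"
  assume ab: "\<forall>i<m. a i \<in> S \<and> b i \<in> S"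
  define ca where "ca = (\<lambda>u. real (card {j. j < m \<and> a j = u}))"
  define cb where "cb = (\<lambda>u. real (card {j. j < m \<and> b j = u}))"
  have ca: "(\<Sum>j<m. g (a j)) = (\<Sum>u\<in>S. ca u * g u)" for g :: "_ \<Rightarrow> real"
    unfolding ca_def by (rule sum_by_multiplicity[OF assms(1)]) (use ab in auto)
  have cb: "(\<Sum>j<m. g (b j)) = (\<Sum>u\<in>S. cb u * g u)" for g :: "_ \<Rightarrow> real"
    unfolding cb_def by (rule sum_by_multiplicity[OF assms(1)]) (use ab in auto)
  have "sum (\<lambda>u. ca u - cb u) S = 0"
    using ca[of "\<lambda>_. 1"] cb[of "\<lambda>_. 1"] by (simp add: sum_subtractf)
  then have "quad_form S (\<lambda>u v. d u v powr p) (\<lambda>u. ca u - cb u) \<le> 0"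
    using assms(5) unfolding cnd_kernel_def by blast
  then show "(\<Sum>k<m. \<Sum>l\<in>{k<..<m}. d (a k) (a l) powr p + d (b k) (b l) powr p)
      \<le> (\<Sum>j<m. \<Sum>i<m. d (a j) (b i) powr p)"
    using roundness_inequality_iff_quad_form[where D = "\<lambda>u v. d u v powr p", OF _ _ ca cb] assms(2,3)
    by simp
qed

lemma sum_list_replicate_concat:
  fixes g :: "'a \<Rightarrow> real"
  assumes "distinct xs"
  shows "sum_list (map g (concat (map (\<lambda>u. replicate (c u) u) xs))) = (\<Sum>u\<in>set xs. real (c u) * g u)"
  using assms by (induction xs) (auto simp: sum_list_replicate)

text \<open>An integral weight vector of total mass zero is the difference of the multiplicity vectors
  of two tuples of equal length.\<close>
lemma gr_exponent_imp_quad_form_int: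
  fixes d :: "'a \<Rightarrow> 'a \<Rightarrow> real"
  assumes S: "finite S" and sym: "\<And>u v. d u v = d v u" and diag: "\<And>u. d u u = 0"
    and gr: "gr_exponent d S p" and int: "\<forall>u\<in>S. \<eta> u \<in> \<int>" and mass: "sum \<eta> S = 0"
  shows "quad_form S (\<lambda>u v. d u v powr p) \<eta> \<le> 0"
proof -
  obtain xs where xs: "set xs = S" "distinct xs" using finite_distinct_list[OF S] by blast
  define pc where "pc = (\<lambda>u. nat \<lfloor>\<eta> u\<rfloor>)"
  define nc where "nc = (\<lambda>u. nat \<lfloor>- \<eta> u\<rfloor>)"
  define La where "La = concat (map (\<lambda>u. replicate (pc u) u) xs)"
  define Lb where "Lb = concat (map (\<lambda>u. replicate (nc u) u) xs)"
  have pn: "real (pc u) - real (nc u) = \<eta> u" if "u \<in> S" for u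
  proof -
    from that int have "\<eta> u \<in> \<int>" by blast
    then obtain k where "\<eta> u = of_int k" by (rule Ints_cases)
    then show ?thesis unfolding pc_def nc_def by simp
  qed
  have La: "sum_list (map g La) = (\<Sum>u\<in>S. real (pc u) * g u)" for g :: "_ \<Rightarrow> real"
    unfolding La_def using sum_list_replicate_concat[OF xs(2)] xs(1) by simp
  have Lb: "sum_list (map g Lb) = (\<Sum>u\<in>S. real (nc u) * g u)" for g :: "_ \<Rightarrow> real"
    unfolding Lb_def using sum_list_replicate_concat[OF xs(2)] xs(1) by simp
  have "real (length La) - real (length Lb) = (\<Sum>u\<in>S. real (pc u) - real (nc u))"
    using La[of "\<lambda>_. 1"] Lb[of "\<lambda>_. 1"] by (simp add: sum_list_triv sum_subtractf)
  then have len: "length Lb = length La" using pn mass by simp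
  define m where "m = length La"
  have ca: "(\<Sum>j<m. g (La ! j)) = (\<Sum>u\<in>S. real (pc u) * g u)" for g :: "_ \<Rightarrow> real"
    unfolding m_def La[symmetric] sum_list_sum_nth by (simp add: atLeast0LessThan)
  have cb: "(\<Sum>j<m. g (Lb ! j)) = (\<Sum>u\<in>S. real (nc u) * g u)" for g :: "_ \<Rightarrow> real"
    unfolding m_def Lb[symmetric] sum_list_sum_nth len[symmetric] by (simp add: atLeast0LessThan)
  have "set La \<subseteq> S" "set Lb \<subseteq> S" using xs(1) by (auto simp: La_def Lb_def)
  then have "\<forall>i<m. La ! i \<in> S \<and> Lb ! i \<in> S"
    using len nth_mem[of _ La] nth_mem[of _ Lb] unfolding m_def by (metis subsetD)
  then have "(\<Sum>k<m. \<Sum>l\<in>{k<..<m}. d (La ! k) (La ! l) powr p + d (Lb ! k) (Lb ! l) powr p)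
      \<le> (\<Sum>j<m. \<Sum>i<m. d (La ! j) (Lb ! i) powr p)"
    using gr unfolding gr_exponent_def by blast
  then have "quad_form S (\<lambda>u v. d u v powr p) (\<lambda>u. real (pc u) - real (nc u)) \<le> 0"
    using roundness_inequality_iff_quad_form[where D = "\<lambda>u v. d u v powr p", OF _ _ ca cb] sym diag
    by simp
  moreover have "quad_form S (\<lambda>u v. d u v powr p) (\<lambda>u. real (pc u) - real (nc u))
      = quad_form S (\<lambda>u v. d u v powr p) \<eta>"
    by (rule quad_form_cong) (auto simp: pn)
  ultimately show ?thesis by simp
qed

lemma floor_mult_div_tendsto: "(\<lambda>N. real_of_int \<lfloor>real N * x\<rfloor> / real N) \<longlonglongrightarrow> x"
proof (rule tendsto_sandwich[of "\<lambda>N. x - 1 / real N" _ _ "\<lambda>_. x"])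
  show "\<forall>\<^sub>F N in sequentially. x - 1 / real N \<le> real_of_int \<lfloor>real N * x\<rfloor> / real N"
    using eventually_gt_at_top[of "0::nat"]
  proof eventually_elim
    case (elim N)
    have "real N * x - 1 \<le> real_of_int \<lfloor>real N * x\<rfloor>" by linarith
    then have "(real N * x - 1) / real N \<le> real_of_int \<lfloor>real N * x\<rfloor> / real N"
      by (rule divide_right_mono) simp
    moreover have "(real N * x - 1) / real N = x - 1 / real N" using elim by (simp add: field_simps)
    ultimately show ?case by simp
  qed
  show "\<forall>\<^sub>F N in sequentially. real_of_int \<lfloor>real N * x\<rfloor> / real N \<le> x"
    using eventually_gt_at_top[of "0::nat"] by eventually_elim (simp add: field_simps)
  show "(\<lambda>N. x - 1 / real N) \<longlonglongrightarrow> x"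
    using tendsto_diff[OF tendsto_const lim_1_over_n, of x] by simp
qed simp

text \<open>Real weights are approximated by \<open>\<lfloor>N \<eta>\<rfloor> / N\<close>, corrected at one point to keep mass zero.\<close>
lemma gr_exponent_imp_cnd_kernel:
  fixes d :: "'a \<Rightarrow> 'a \<Rightarrow> real"
  assumes S: "finite S" and sym: "\<And>u v. d u v = d v u" and diag: "\<And>u. d u u = 0"
    and gr: "gr_exponent d S p"
  shows "cnd_kernel S (\<lambda>u v. d u v powr p)"
  unfolding cnd_kernel_def
proof (intro allI impI)
  fix \<eta> :: "'a \<Rightarrow> real"
  assume mass: "sum \<eta> S = 0"
  let ?D = "\<lambda>u v. d u v powr p"
  show "quad_form S ?D \<eta> \<le> 0"
  proof (cases "S = {}")
    case True
    then show ?thesis by (simp add: quad_form_def)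
  next
    case False
    then obtain u0 where u0: "u0 \<in> S" by blast
    define e where "e = (\<lambda>(N::nat) u. if u = u0 then - (\<Sum>v\<in>S-{u0}. real_of_int \<lfloor>real N * \<eta> v\<rfloor>)
                                       else real_of_int \<lfloor>real N * \<eta> u\<rfloor>)"
    have "quad_form S ?D (\<lambda>u. e N u / real N) \<le> 0" for N
    proof -
      have "sum (e N) (S - {u0}) = (\<Sum>v\<in>S-{u0}. real_of_int \<lfloor>real N * \<eta> v\<rfloor>)"
        by (intro sum.cong) (auto simp: e_def)
      then have "sum (e N) S = 0"
        using S u0 by (simp add: sum.remove e_def)
      moreover have "\<forall>u\<in>S. e N u \<in> \<int>" unfolding e_def by auto
      ultimately have "quad_form S ?D (e N) \<le> 0"
        by (intro gr_exponent_imp_quad_form_int[OF S sym diag gr])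
      then show ?thesis
        using quad_form_scale[of S ?D "1 / real N" "e N"] by (simp add: mult_nonneg_nonpos)
    qed
    moreover have "(\<lambda>N. e N u / real N) \<longlonglongrightarrow> \<eta> u" if "u \<in> S" for u
    proof (cases "u = u0")
      case True
      have "(\<lambda>N. - (\<Sum>v\<in>S-{u0}. real_of_int \<lfloor>real N * \<eta> v\<rfloor> / real N)) \<longlonglongrightarrow> - (\<Sum>v\<in>S-{u0}. \<eta> v)"
        by (intro tendsto_minus tendsto_sum floor_mult_div_tendsto)
      moreover have "- (\<Sum>v\<in>S-{u0}. \<eta> v) = \<eta> u0"
        using mass S u0 by (simp add: sum.remove)
      ultimately show ?thesis using True by (simp add: e_def sum_divide_distrib)
    next
      case False
      then show ?thesis using floor_mult_div_tendsto[of "\<eta> u"] by (simp add: e_def)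
    qed
    then have "(\<lambda>N. quad_form S ?D (\<lambda>u. e N u / real N)) \<longlonglongrightarrow> quad_form S ?D \<eta>"
      unfolding quad_form_def by (intro tendsto_sum tendsto_mult tendsto_const)
    ultimately show ?thesis by (intro LIMSEQ_le_const2) auto
  qed
qed

lemma gr_exponent_iff_cnd_kernel:
  fixes d :: "'a \<Rightarrow> 'a \<Rightarrow> real"
  assumes "finite S" "\<And>u v. d u v = d v u" "\<And>u. d u u = 0"
  shows "gr_exponent d S p \<longleftrightarrow> p \<ge> 0 \<and> cnd_kernel S (\<lambda>u v. d u v powr p)"
proof
  assume gr: "gr_exponent d S p"
  then show "p \<ge> 0 \<and> cnd_kernel S (\<lambda>u v. d u v powr p)"
    using gr_exponent_imp_cnd_kernel[OF assms gr] by (simp add: gr_exponent_def)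
next
  assume "p \<ge> 0 \<and> cnd_kernel S (\<lambda>u v. d u v powr p)"
  then show "gr_exponent d S p" using cnd_kernel_imp_gr_exponent[OF assms] by simp
qed

lemma quad_form_abs_le:
  assumes "\<And>u v. u \<in> F \<Longrightarrow> v \<in> F \<Longrightarrow> \<bar>K u v\<bar> \<le> e"
  shows "quad_form F K \<xi> \<le> e * (\<Sum>u\<in>F. \<bar>\<xi> u\<bar>)\<^sup>2"
proof -
  have "quad_form F K \<xi> \<le> (\<Sum>u\<in>F. \<Sum>v\<in>F. \<bar>\<xi> u\<bar> * \<bar>\<xi> v\<bar> * e)"
    unfolding quad_form_def
  proof (intro sum_mono)
    fix u v assume "u \<in> F" "v \<in> F"
    have "\<xi> u * \<xi> v * K u v \<le> \<bar>\<xi> u\<bar> * \<bar>\<xi> v\<bar> * \<bar>K u v\<bar>" by (simp add: abs_mult flip: abs_mult)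
    also have "\<dots> \<le> \<bar>\<xi> u\<bar> * \<bar>\<xi> v\<bar> * e" using assms[OF \<open>u \<in> F\<close> \<open>v \<in> F\<close>] by (simp add: mult_left_mono)
    finally show "\<xi> u * \<xi> v * K u v \<le> \<bar>\<xi> u\<bar> * \<bar>\<xi> v\<bar> * e" .
  qed
  also have "\<dots> = e * (\<Sum>u\<in>F. \<bar>\<xi> u\<bar>)\<^sup>2"
    by (simp add: power2_eq_square sum_product sum_distrib_left mult_ac)
  finally show ?thesis .
qed

lemma quad_form_dist_squared:
  fixes F :: "'a::real_inner set"
  assumes "sum \<eta> F = 0"
  shows "quad_form F (\<lambda>u v. (dist u v)\<^sup>2) \<eta> = -2 * (norm (\<Sum>u\<in>F. \<eta> u *\<^sub>R u))\<^sup>2"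
proof -
  have "(dist u v)\<^sup>2 = u \<bullet> u + v \<bullet> v - 2 * (u \<bullet> v)" for u v :: 'a
    by (simp add: dist_norm power2_norm_eq_inner inner_diff_left inner_diff_right inner_commute)
  then have "quad_form F (\<lambda>u v. (dist u v)\<^sup>2) \<eta>
      = quad_form F (\<lambda>u v. u \<bullet> u + v \<bullet> v) \<eta> - 2 * quad_form F (\<lambda>u v. u \<bullet> v) \<eta>"
    by (simp add: quad_form_diff_kernel quad_form_cmult_kernel flip: quad_form_cmult_kernel)
  also have "quad_form F (\<lambda>u v. u \<bullet> u + v \<bullet> v) \<eta> = 0"
    using assms by (simp add: quad_form_sum_kernel)
  also have "quad_form F (\<lambda>u v. u \<bullet> v) \<eta> = (norm (\<Sum>u\<in>F. \<eta> u *\<^sub>R u))\<^sup>2"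
    by (simp add: quad_form_def power2_norm_eq_inner inner_sum_left inner_sum_right
        sum_distrib_left mult_ac inner_commute)
  finally show ?thesis by simp
qed

section \<open>The Hamming cube\<close>

lemma l1_dist_commute: "l1_dist u v = l1_dist v u"
  unfolding l1_dist_def by (simp add: abs_minus_commute)

lemma l1_dist_self [simp]: "l1_dist u u = 0"
  unfolding l1_dist_def by simp

lemma l1_dist_pos: "u \<noteq> v \<Longrightarrow> 0 < l1_dist u v"
proof -
  assume "u \<noteq> v"
  then obtain i where "u $ i \<noteq> v $ i" by (auto simp: vec_eq_iff)
  then have "0 < \<bar>u $ i - v $ i\<bar>" by simp
  also have "\<dots> \<le> l1_dist u v" unfolding l1_dist_def by (rule member_le_sum) auto
  finally show ?thesis .
qed

lemma l1_dist_nonneg: "0 \<le> l1_dist u v"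
  using l1_dist_pos[of u v] by (cases "u = v") auto

text \<open>On the Hamming cube \<open>\<bar>t\<bar> = t\<^sup>2\<close> for every coordinate difference \<open>t\<close>, so the
  \<open>\<ell>\<^sub>1\<close> metric is the square of the Euclidean one.\<close>
lemma l1_dist_hamming_cube:
  assumes "u \<in> hamming_cube" "v \<in> hamming_cube"
  shows "l1_dist u v = (dist u v)\<^sup>2"
proof -
  have "\<bar>u $ i - v $ i\<bar> = (u $ i - v $ i)\<^sup>2" for i
  proof -
    have "u $ i = 0 \<or> u $ i = 1" "v $ i = 0 \<or> v $ i = 1"
      using assms unfolding hamming_cube_def by auto
    then show ?thesis by (elim disjE) simp_all
  qed
  moreover have "(dist u v)\<^sup>2 = (\<Sum>i\<in>UNIV. (u $ i - v $ i)\<^sup>2)"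
    by (simp add: dist_vec_def L2_set_def dist_real_def sum_nonneg)
  ultimately show ?thesis unfolding l1_dist_def by simp
qed

lemma quad_form_l1_dist_hamming_cube:
  assumes "F \<subseteq> hamming_cube" "sum \<eta> F = 0"
  shows "quad_form F (\<lambda>u v. l1_dist u v powr 1) \<eta> = -2 * (norm (\<Sum>u\<in>F. \<eta> u *\<^sub>R u))\<^sup>2"
proof -
  have "l1_dist u v powr 1 = (dist u v)\<^sup>2" if "u \<in> F" "v \<in> F" for u v
    using that assms(1) l1_dist_nonneg[of u v] l1_dist_hamming_cube[of u v] by auto
  then have "quad_form F (\<lambda>u v. l1_dist u v powr 1) \<eta> = quad_form F (\<lambda>u v. (dist u v)\<^sup>2) \<eta>"
    by (intro quad_form_cong) auto
  then show ?thesis using quad_form_dist_squared[OF assms(2)] by simp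
qed

lemma strict_neg_type_l1_dist_iff:
  fixes S :: "(real ^ 'n) set"
  assumes S: "finite S" "S \<subseteq> hamming_cube"
  shows "strict_neg_type l1_dist S 1 \<longleftrightarrow> \<not> affine_dependent S"
proof -
  have form: "(\<Sum>x\<in>F. \<Sum>y\<in>F. l1_dist x y powr 1 * \<eta> x * \<eta> y) = -2 * (norm (\<Sum>u\<in>F. \<eta> u *\<^sub>R u))\<^sup>2"
    if "F \<subseteq> S" "sum \<eta> F = 0" for F and \<eta> :: "real ^ 'n \<Rightarrow> real"
    using quad_form_l1_dist_hamming_cube[of F \<eta>] that S(2) by (simp add: quad_form_def mult_ac)
  show ?thesis
  proof
    assume strict: "strict_neg_type l1_dist S 1"
    show "\<not> affine_dependent S"
    proof
      assume "affine_dependent S"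
      then obtain U where U: "sum U S = 0" "\<exists>v\<in>S. U v \<noteq> 0" "(\<Sum>v\<in>S. U v *\<^sub>R v) = 0"
        using affine_dependent_explicit_finite[OF S(1)] by blast
      have "card S \<ge> 2"
      proof (rule ccontr)
        assume "\<not> card S \<ge> 2"
        moreover obtain v where "v \<in> S" "U v \<noteq> 0" using U(2) by blast
        ultimately have "S = {v}" using card_le_Suc0_iff_eq[OF S(1)] by auto
        then show False using U(1) \<open>U v \<noteq> 0\<close> by simp
      qed
      then have "(\<Sum>x\<in>S. \<Sum>y\<in>S. l1_dist x y powr 1 * U x * U y) < 0"
        using strict S(1) U(1,2) unfolding strict_neg_type_def by blast
      then show False using form[OF order_refl U(1)] U(3) by simp
    qed
  next
    assume indep: "\<not> affine_dependent S"
    show "strict_neg_type l1_dist S 1"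
      unfolding strict_neg_type_def neg_type_def
    proof (intro conjI allI impI)
      fix F and \<eta> :: "real ^ 'n \<Rightarrow> real"
      assume F: "F \<subseteq> S" "finite F" "card F \<ge> 2" "sum \<eta> F = 0"
      show "(\<Sum>x\<in>F. \<Sum>y\<in>F. l1_dist x y powr 1 * \<eta> x * \<eta> y) \<le> 0"
        unfolding form[OF F(1,4)] by simp
    next
      fix F and \<eta> :: "real ^ 'n \<Rightarrow> real"
      assume F: "F \<subseteq> S" "finite F" "card F \<ge> 2" "sum \<eta> F = 0" and nz: "\<exists>x\<in>F. \<eta> x \<noteq> 0"
      have "(\<Sum>u\<in>F. \<eta> u *\<^sub>R u) \<noteq> 0"
      proof
        assume "(\<Sum>u\<in>F. \<eta> u *\<^sub>R u) = 0"
        then have "affine_dependent F" using affine_dependent_explicit_finite[OF F(2)] F(4) nz by blast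
        then show False using affine_dependent_subset[OF _ F(1)] indep by blast
      qed
      then show "(\<Sum>x\<in>F. \<Sum>y\<in>F. l1_dist x y powr 1 * \<eta> x * \<eta> y) < 0"
        unfolding form[OF F(1,4)] by simp
    qed simp
  qed
qed

lemma independent_coefficient_bound:
  fixes f :: "'i \<Rightarrow> 'a::euclidean_space"
  assumes I: "finite I" "inj_on f I" and indep: "\<not> dependent (f ` I)"
  shows "\<exists>M\<ge>0. \<forall>c. \<forall>i\<in>I. \<bar>c i\<bar> \<le> M * norm (\<Sum>j\<in>I. c j *\<^sub>R f j)"
proof -
  have "\<forall>i\<in>I. \<exists>g. linear g \<and> (\<forall>j\<in>I. g (f j) = (if j = i then 1 else (0::real)))"
  proof
    fix i assume i: "i \<in> I"
    obtain g where "linear g" "\<forall>x\<in>f ` I. g x = (if x = f i then 1 else (0::real))"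
      using linear_independent_extend[OF indep, of "\<lambda>x. if x = f i then 1 else 0"] by blast
    moreover have "f j = f i \<longleftrightarrow> j = i" if "j \<in> I" for j using I(2) i that by (auto dest: inj_onD)
    ultimately show "\<exists>g. linear g \<and> (\<forall>j\<in>I. g (f j) = (if j = i then 1 else (0::real)))"
      by (intro exI[of _ g]) simp
  qed
  from bchoice[OF this] obtain g
    where g: "\<forall>i\<in>I. linear (g i) \<and> (\<forall>j\<in>I. g i (f j) = (if j = i then 1 else (0::real)))"
    by blast
  have "\<forall>i\<in>I. \<exists>M>0. \<forall>x. norm (g i x) \<le> M * norm x"
  proof
    fix i assume "i \<in> I"
    then obtain M where "M > 0" "\<And>x. norm (g i x) \<le> M * norm x"
      using g linear_bounded_pos by blast
    then show "\<exists>M>0. \<forall>x. norm (g i x) \<le> M * norm x" by blast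
  qed
  from bchoice[OF this] obtain M where M: "\<forall>i\<in>I. M i > 0 \<and> (\<forall>x. norm (g i x) \<le> M i * norm x)"
    by blast
  show ?thesis
  proof (intro exI[of _ "\<Sum>i\<in>I. M i"] conjI allI ballI)
    show "0 \<le> (\<Sum>i\<in>I. M i)" using M by (simp add: less_imp_le sum_nonneg)
    fix c and i assume i: "i \<in> I"
    have lin: "linear (g i)" using g i by blast
    have "g i (\<Sum>j\<in>I. c j *\<^sub>R f j) = (\<Sum>j\<in>I. c j * g i (f j))"
      by (simp add: linear_sum[OF lin] linear_cmul[OF lin])
    also have "\<dots> = (\<Sum>j\<in>I. if j = i then c j else 0)"
      using g i by (intro sum.cong) auto
    also have "\<dots> = c i" using I(1) i by simp
    finally have "\<bar>c i\<bar> \<le> M i * norm (\<Sum>j\<in>I. c j *\<^sub>R f j)"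
      using M i by (metis real_norm_def)
    also have "\<dots> \<le> (\<Sum>i\<in>I. M i) * norm (\<Sum>j\<in>I. c j *\<^sub>R f j)"
      using M I(1) i by (intro mult_right_mono member_le_sum) (auto intro: less_imp_le)
    finally show "\<bar>c i\<bar> \<le> (\<Sum>i\<in>I. M i) * norm (\<Sum>j\<in>I. c j *\<^sub>R f j)" .
  qed
qed

lemma affine_independent_weight_bound:
  fixes S :: "'a::euclidean_space set"
  assumes S: "finite S" and indep: "\<not> affine_dependent S"
  shows "\<exists>C\<ge>0. \<forall>\<eta>. sum \<eta> S = 0 \<longrightarrow> (\<Sum>u\<in>S. \<bar>\<eta> u\<bar>) \<le> C * norm (\<Sum>u\<in>S. \<eta> u *\<^sub>R u)"
proof (cases "S = {}")
  case False
  then obtain u0 where u0: "u0 \<in> S" by blast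
  have "\<not> dependent ((\<lambda>u. u - u0) ` (S - {u0}))"
    using indep affine_dependent_iff_dependent2[OF u0] by simp
  moreover have "inj_on (\<lambda>u. u - u0) (S - {u0})" by (simp add: inj_on_def)
  ultimately obtain M where M: "M \<ge> 0"
    "\<forall>c. \<forall>u\<in>S - {u0}. \<bar>c u\<bar> \<le> M * norm (\<Sum>v\<in>S - {u0}. c v *\<^sub>R (v - u0))"
    using independent_coefficient_bound[OF finite_Diff[OF S]] by blast
  show ?thesis
  proof (intro exI[of _ "2 * real (card S) * M"] conjI allI impI)
    show "0 \<le> 2 * real (card S) * M" using M(1) by simp
    fix \<eta> :: "'a \<Rightarrow> real" assume mass: "sum \<eta> S = 0"
    let ?w = "\<Sum>u\<in>S. \<eta> u *\<^sub>R u"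
    have "(\<Sum>v\<in>S. \<eta> v *\<^sub>R (v - u0)) = ?w"
      using mass by (simp add: scaleR_diff_right sum_subtractf flip: scaleR_sum_left)
    then have w: "(\<Sum>v\<in>S - {u0}. \<eta> v *\<^sub>R (v - u0)) = ?w"
      using S u0 by (simp add: sum.remove)
    have "(\<Sum>u\<in>S - {u0}. \<bar>\<eta> u\<bar>) \<le> (\<Sum>u\<in>S - {u0}. M * norm ?w)"
      using M(2) unfolding w[symmetric] by (intro sum_mono) blast
    also have "\<dots> = real (card (S - {u0})) * (M * norm ?w)" by simp
    also have "\<dots> \<le> real (card S) * (M * norm ?w)"
      using M(1) card_mono[OF S Diff_subset] by (intro mult_right_mono) auto
    finally have rest: "(\<Sum>u\<in>S - {u0}. \<bar>\<eta> u\<bar>) \<le> real (card S) * M * norm ?w"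
      by (simp add: mult.assoc)
    have "\<bar>\<eta> u0\<bar> = \<bar>\<Sum>u\<in>S - {u0}. \<eta> u\<bar>"
      using mass S u0 by (simp add: sum.remove eq_neg_iff_add_eq_0)
    also have "\<dots> \<le> (\<Sum>u\<in>S - {u0}. \<bar>\<eta> u\<bar>)" by (rule sum_abs)
    finally have "\<bar>\<eta> u0\<bar> \<le> real (card S) * M * norm ?w" using rest by linarith
    then show "(\<Sum>u\<in>S. \<bar>\<eta> u\<bar>) \<le> 2 * real (card S) * M * norm ?w"
      using rest S u0 by (simp add: sum.remove)
  qed
qed auto

lemma powr_close_to_1:
  fixes X :: "real set" and e :: real
  assumes "finite X" "e > 0"
  shows "\<exists>p>1. \<forall>x\<in>X. \<bar>x powr p - x powr 1\<bar> \<le> e"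
proof -
  have "((\<lambda>p. x powr p) \<longlongrightarrow> x powr 1) (at_right 1)" for x :: real
  proof (cases "x = 0")
    case False
    then show ?thesis by (intro tendsto_powr tendsto_const tendsto_ident_at)
  qed simp
  then have "\<forall>\<^sub>F p in at_right 1. \<bar>x powr p - x powr 1\<bar> < e" for x :: real
    using assms(2) unfolding tendsto_iff dist_real_def by blast
  then have "\<forall>\<^sub>F p in at_right 1. \<forall>x\<in>X. \<bar>x powr p - x powr 1\<bar> < e"
    using assms(1) by (intro eventually_ball_finite ballI) auto
  then obtain b where "b > 1" "\<And>p. 1 < p \<Longrightarrow> p < b \<Longrightarrow> \<forall>x\<in>X. \<bar>x powr p - x powr 1\<bar> < e"
    unfolding eventually_at_right_field by blast
  then show ?thesis by (intro exI[of _ "(1 + b) / 2"]) (auto intro: less_imp_le)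
qed

text \<open>Perturbation: on an affinely independent subset of the cube, \<open>-Q(\<eta>) = 2 \<parallel>\<Sum>\<eta> u u\<parallel>\<^sup>2\<close>
  dominates \<open>(\<Sum>\<bar>\<eta> u\<bar>)\<^sup>2\<close>, which controls the change of the form from \<open>l1_dist\<close> to
  \<open>l1_dist powr p\<close> for \<open>p\<close> close to \<open>1\<close>.\<close>
lemma cnd_kernel_l1_dist_powr_gt_1:
  fixes S :: "(real ^ 'n) set"
  assumes S: "finite S" "S \<subseteq> hamming_cube" and indep: "\<not> affine_dependent S"
  shows "\<exists>p>1. cnd_kernel S (\<lambda>u v. l1_dist u v powr p)"
proof -
  obtain C where C: "C \<ge> 0"
    "\<And>\<eta>. sum \<eta> S = 0 \<Longrightarrow> (\<Sum>u\<in>S. \<bar>\<eta> u\<bar>) \<le> C * norm (\<Sum>u\<in>S. \<eta> u *\<^sub>R u)"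
    using affine_independent_weight_bound[OF S(1) indep] by blast
  define e where "e = 1 / (C\<^sup>2 + 1)"
  have e: "e > 0" "e * C\<^sup>2 \<le> 2" by (auto simp: e_def field_simps add_pos_nonneg)
  obtain p where p: "p > 1"
    "\<And>u v. u \<in> S \<Longrightarrow> v \<in> S \<Longrightarrow> \<bar>l1_dist u v powr p - l1_dist u v powr 1\<bar> \<le> e"
    using powr_close_to_1[of "(\<lambda>(u, v). l1_dist u v) ` (S \<times> S)", OF _ e(1)] S(1) by auto
  have "quad_form S (\<lambda>u v. l1_dist u v powr p) \<eta> \<le> 0" if mass: "sum \<eta> S = 0" for \<eta>
  proof -
    let ?w = "norm (\<Sum>u\<in>S. \<eta> u *\<^sub>R u)"
    have "quad_form S (\<lambda>u v. l1_dist u v powr p - l1_dist u v powr 1) \<eta> \<le> e * (\<Sum>u\<in>S. \<bar>\<eta> u\<bar>)\<^sup>2"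
      using p(2) by (rule quad_form_abs_le)
    also have "\<dots> \<le> e * (C * ?w)\<^sup>2"
      using C(2)[OF mass] e(1) by (intro mult_left_mono power_mono) (auto intro: sum_nonneg)
    also have "\<dots> \<le> 2 * ?w\<^sup>2"
      using e(2) by (simp add: power_mult_distrib mult.assoc[symmetric] mult_right_mono)
    finally show ?thesis
      using quad_form_l1_dist_hamming_cube[OF S(2) mass]
      by (simp add: quad_form_diff_kernel)
  qed
  then show ?thesis using p(1) unfolding cnd_kernel_def by blast
qed

lemma gr_exponent_l1_dist_le_1:
  fixes S :: "(real ^ 'n) set"
  assumes S: "finite S" "S \<subseteq> hamming_cube" and dep: "affine_dependent S"
    and gr: "gr_exponent l1_dist S p"
  shows "p \<le> 1"
proof (rule ccontr)
  assume "\<not> p \<le> 1"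
  then have p: "p > 1" by simp
  obtain U where U: "sum U S = 0" "\<exists>v\<in>S. U v \<noteq> 0" "(\<Sum>v\<in>S. U v *\<^sub>R v) = 0"
    using affine_dependent_explicit_finite[OF S(1)] dep by blast
  have cnd: "cnd_kernel S (\<lambda>u v. l1_dist u v powr p)"
    by (rule gr_exponent_imp_cnd_kernel[OF S(1) l1_dist_commute l1_dist_self gr])
  have strict: "quad_form S (\<lambda>u v. (l1_dist u v powr p) powr (1 / p)) U < 0"
  proof (rule cnd_kernel_powr_strict[OF S(1) cnd])
    show "symmetric_kernel S (\<lambda>u v. l1_dist u v powr p)"
      by (simp add: symmetric_kernel_def l1_dist_commute)
    show "0 < l1_dist u v powr p" if "u \<noteq> v" for u v using l1_dist_pos[OF that] by simp
    show "0 < 1 / p" "1 / p < 1" using p by auto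
  qed (use U in auto)
  have "(\<lambda>u v. (l1_dist u v powr p) powr (1 / p)) = (\<lambda>u v. l1_dist u v powr 1)"
    using p by (simp add: powr_powr)
  then have "quad_form S (\<lambda>u v. l1_dist u v powr 1) U < 0"
    using strict by (rule subst[where P = "\<lambda>K. quad_form S K U < 0"])
  then show False
    unfolding quad_form_l1_dist_hamming_cube[OF S(2) U(1)] U(3) by simp
qed

lemma gen_roundness_l1_dist_eq_1_iff:
  fixes S :: "(real ^ 'n) set"
  assumes S: "finite S" "S \<subseteq> hamming_cube"
  shows "gen_roundness l1_dist S = 1 \<longleftrightarrow> affine_dependent S"
proof -
  note gr_iff = gr_exponent_iff_cnd_kernel[OF S(1) l1_dist_commute l1_dist_self]
  have "gr_exponent l1_dist S 1"
    unfolding gr_iff cnd_kernel_def using quad_form_l1_dist_hamming_cube[OF S(2)] by simp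
  then have one: "1 \<le> gen_roundness l1_dist S"
    unfolding gen_roundness_def by (metis Sup_upper image_eqI mem_Collect_eq one_ereal_def)
  show ?thesis
  proof
    assume eq: "gen_roundness l1_dist S = 1"
    show "affine_dependent S"
    proof (rule ccontr)
      assume "\<not> affine_dependent S"
      then obtain p where "p > 1" "gr_exponent l1_dist S p"
        using cnd_kernel_l1_dist_powr_gt_1[OF S] gr_iff by force
      then have "ereal p \<le> gen_roundness l1_dist S"
        unfolding gen_roundness_def by (intro Sup_upper) auto
      then show False using eq \<open>p > 1\<close> by simp
    qed
  next
    assume "affine_dependent S"
    then have "gen_roundness l1_dist S \<le> 1"
      using gr_exponent_l1_dist_le_1[OF S] unfolding gen_roundness_def by (intro Sup_least) auto
    then show "gen_roundness l1_dist S = 1" using one by simp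
  qed
qed

theorem theorem4p3:
  fixes x :: "nat \<Rightarrow> real ^ 'n" and k :: nat
  assumes "inj_on x {0..k}"
    and "\<forall>i\<le>k. x i \<in> hamming_cube"
  shows "(gen_roundness l1_dist (x ` {0..k}) = 1 \<longleftrightarrow>
           dependent ((\<lambda>i. x i - x 0) ` {1..k}))
       \<and> (strict_neg_type l1_dist (x ` {0..k}) 1 \<longleftrightarrow>
           \<not> dependent ((\<lambda>i. x i - x 0) ` {1..k}))"
proof -
  define S where "S = x ` {0..k}"
  have S: "finite S" "S \<subseteq> hamming_cube" using assms(2) by (auto simp: S_def)
  have "{0..k} - {0} = {1..k}" by auto
  then have "S - {x 0} = x ` {1..k}"
    using inj_on_image_set_diff[OF assms(1), of "{0..k}" "{0}"] by (simp add: S_def)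
  then have "affine_dependent S \<longleftrightarrow> dependent ((\<lambda>i. x i - x 0) ` {1..k})"
    using affine_dependent_iff_dependent2[of "x 0" S] by (simp add: S_def image_image)
  then show ?thesis
    using gen_roundness_l1_dist_eq_1_iff[OF S] strict_neg_type_l1_dist_iff[OF S]
    unfolding S_def by simp
qed

end
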